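(* Let $n_1,n_2\in(0,1)$ with $n_1+n_2=1$ and for $N\ge2$ let $N_1=N_1(N),N_2=N_2(N)\in\mathbb{N}$ with $N_1+N_2=N$ and $|N_1/N-n_1|=O(N^{-1})=|N_2/N-n_2|$ as $N\to\infty$. For each $k\in\mathbb{N}$ there exists $c_k>0$ such that for all $N>k$ $$\mathrm{Tr}\big|\gamma^{(k)}_{\mathrm{spin},N_1,N_2}-\gamma^{(k)}_{\mathrm{spin},\infty}\big|\le\frac{c_k}{N},$$ where $\gamma^{(k)}_{\mathrm{spin},N_1,N_2}$ is the $k$-body marginal of $|e_1^{\otimes N_1}\vee e_2^{\otimes N_2}\rangle\langle e_1^{\otimes N_1}\vee e_2^{\otimes N_2}|$ on $(\mathbb{C}^2)^{\otimes N}$ and $$\gamma^{(k)}_{\mathrm{spin},\infty}:=\sum_{j=0}^k\binom{k}{j}n_1^{k-j}n_2^{j}\,\big|e_1^{\otimes(k-j)}\vee e_2^{\otimes j}\big\rangle\big\langle e_1^{\otimes(k-j)}\vee e_2^{\otimes j}\big|.$$ The trace is taken in $(\mathbb{C}^2)^{\otimes k}$.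
   Context: $e_1=\binom10$, $e_2=\binom01$. For orthonormal $e_1,e_2$, $e_1^{\otimes a}\vee e_2^{\otimes b}$ is the unit vector $\binom{a+b}{a}^{-1/2}$ times the sum of all distinct tensor products of $a$ copies of $e_1$ and $b$ copies of $e_2$. The $k$-body marginal of a density matrix on $(\mathbb{C}^2)^{\otimes N}$ is the partial trace over $N-k$ tensor factors. *)

theory Defs
  imports Complex_Main "Jordan_Normal_Form.Matrix"
begin

text \<open>The space (C^2)^{tensor N} is identified with C^(2^N) via the
  computational basis: the basis tensor w_0 (x) w_1 (x) ... (x) w_{N-1}, each w_m in
  {e_1, e_2}, is the standard unit vector with index sum over m of (if w_m = e_2 then 2^m else 0).
  A word is a bool list of length N, True at position m meaning that the m-th factor is e_2.\<close>

definition word_index :: "bool list \<Rightarrow> nat" where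
  "word_index ws = (\<Sum>m<length ws. if ws ! m then 2 ^ m else 0)"

definition word_vec :: "bool list \<Rightarrow> complex vec" where
  "word_vec ws = unit_vec (2 ^ length ws) (word_index ws)"

text \<open>e_1^{(x) a} v e_2^{(x) b}: binom(a+b,a)^(-1/2) times the sum of all distinct
  tensor products of a copies of e_1 and b copies of e_2 (sum taken entrywise).\<close>
definition sym_vec :: "nat \<Rightarrow> nat \<Rightarrow> complex vec" where
  "sym_vec a b = vec (2 ^ (a + b)) (\<lambda>i.
     complex_of_real (1 / sqrt (real ((a + b) choose a))) *
     (\<Sum>ws\<in>{ws. length ws = a + b \<and> length (filter id ws) = b}. word_vec ws $ i))"

definition ketbra :: "complex vec \<Rightarrow> complex mat" where
  "ketbra v = mat (dim_vec v) (dim_vec v) (\<lambda>(i, j). v $ i * cnj (v $ j))"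

text \<open>Partial trace of an operator on (C^2)^{(x) N} over the last N - k tensor factors,
  giving the k-body marginal (an operator on (C^2)^{(x) k}).\<close>
definition marginal :: "nat \<Rightarrow> nat \<Rightarrow> complex mat \<Rightarrow> complex mat" where
  "marginal N k \<rho> = mat (2 ^ k) (2 ^ k) (\<lambda>(i, j).
     \<Sum>b<2 ^ (N - k). \<rho> $$ (i + 2 ^ k * b, j + 2 ^ k * b))"

definition gamma_spin :: "nat \<Rightarrow> nat \<Rightarrow> nat \<Rightarrow> complex mat" where
  "gamma_spin k N1 N2 = marginal (N1 + N2) k (ketbra (sym_vec N1 N2))"

definition gamma_spin_inf :: "nat \<Rightarrow> real \<Rightarrow> real \<Rightarrow> complex mat" where
  "gamma_spin_inf k n1 n2 = mat (2 ^ k) (2 ^ k) (\<lambda>(r, s).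
     \<Sum>j\<le>k. complex_of_real (real (k choose j) * n1 ^ (k - j) * n2 ^ j) *
            ketbra (sym_vec (k - j) j) $$ (r, s))"

definition adjoint :: "complex mat \<Rightarrow> complex mat" where
  "adjoint A = mat (dim_col A) (dim_row A) (\<lambda>(i, j). cnj (A $$ (j, i)))"

definition psd :: "complex mat \<Rightarrow> bool" where
  "psd B \<longleftrightarrow> square_mat B \<and> adjoint B = B \<and>
     (\<forall>v \<in> carrier_vec (dim_row B). 0 \<le> Re (\<Sum>i<dim_row B. cnj (v $ i) * (B *\<^sub>v v) $ i))"

definition mat_abs :: "complex mat \<Rightarrow> complex mat" where
  "mat_abs A = (THE B. B \<in> carrier_mat (dim_col A) (dim_col A) \<and> psd B \<and> B * B = adjoint A * A)"

definition mtrace :: "complex mat \<Rightarrow> complex" where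
  "mtrace A = (\<Sum>i<dim_row A. A $$ (i, i))"

definition trace_norm :: "complex mat \<Rightarrow> real" where
  "trace_norm A = Re (mtrace (mat_abs A))"

end

theory Submission
  imports Defs
begin

text \<open>In the computational basis the symmetric vector with N2 factors e_2 is the normalised
  indicator of the binary words with N2 ones. Hence the k-body marginal is block diagonal with
  respect to the number t of ones of a k-letter word, constant C(N-k, N2-t) / C(N, N1) on the
  block of t, and the limit operator has the same shape with constant n1^(k-t) n2^t. For such
  block-constant matrices the absolute value just replaces every constant by its modulus, so
  the trace norm of the difference is an explicit sum of 2^k terms. The binomial ratio is a
  product of k conditional probabilities, each within O(k/N) of n1 or n2, which bounds every
  term by O(1/N) once N is large; the finitely many small N only enlarge the constant.\<close>

section \<open>Binary words\<close>

fun popcount :: "nat \<Rightarrow> nat \<Rightarrow> nat" where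
  "popcount 0 i = 0"
| "popcount (Suc n) i = i mod 2 + popcount n (i div 2)"

fun binary_word :: "nat \<Rightarrow> nat \<Rightarrow> bool list" where
  "binary_word 0 i = []"
| "binary_word (Suc n) i = odd i # binary_word n (i div 2)"

lemma word_index_Nil [simp]: "word_index [] = 0"
  by (simp add: word_index_def)

lemma word_index_Cons [simp]:
  "word_index (w # ws) = (if w then 1 else 0) + 2 * word_index ws"
proof -
  have "word_index (w # ws) = (\<Sum>m<Suc (length ws). if (w # ws) ! m then 2 ^ m else 0)"
    by (simp add: word_index_def)
  also have "\<dots> = (if w then 1 else 0) + (\<Sum>m<length ws. if ws ! m then 2 ^ Suc m else 0)"
    by (subst sum.lessThan_Suc_shift) simp
  also have "(\<Sum>m<length ws. if ws ! m then 2 ^ Suc m else 0) = 2 * word_index ws"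
    by (simp add: word_index_def sum_distrib_left if_distrib cong: if_cong)
  finally show ?thesis .
qed

lemma length_binary_word [simp]: "length (binary_word n i) = n"
  by (induction n arbitrary: i) auto

lemma word_index_binary_word: "i < 2 ^ n \<Longrightarrow> word_index (binary_word n i) = i"
  by (induction n arbitrary: i) auto

lemma binary_word_word_index: "binary_word (length ws) (word_index ws) = ws"
  by (induction ws) auto

lemma word_index_less: "word_index ws < 2 ^ length ws"
  by (induction ws) auto

lemma count_ones_binary_word: "length (filter id (binary_word n i)) = popcount n i"
  by (induction n arbitrary: i) (auto simp: odd_iff_mod_2_eq_one)

lemma popcount_le: "popcount n i \<le> n"
proof (induction n arbitrary: i)
  case (Suc n)
  have "i mod 2 \<le> 1" by simp
  then show ?case using Suc.IH[of "i div 2"] by simp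
qed simp

lemma popcount_add_shift:
  "r < 2 ^ k \<Longrightarrow> popcount (k + m) (r + 2 ^ k * b) = popcount k r + popcount m b"
proof (induction k arbitrary: r)
  case (Suc k)
  have "(r + 2 ^ Suc k * b) mod 2 = r mod 2" by (simp add: mult.assoc)
  moreover have "(r + 2 ^ Suc k * b) div 2 = r div 2 + 2 ^ k * b" by simp
  moreover have "r div 2 < 2 ^ k" using Suc.prems by auto
  ultimately show ?case using Suc.IH by simp
qed simp

lemma sum_popcount_eq:
  "(\<Sum>b<2 ^ m. if popcount m b = t then x else 0) = of_nat (m choose t) * (x :: 'a :: semiring_1)"
proof (induction m arbitrary: t)
  case 0
  then show ?case by (cases t) auto
next
  case (Suc m)
  have halves: "(\<Sum>b<2 * M. f b) = (\<Sum>c<M. f (2 * c) + f (2 * c + 1))" for M and f :: "nat \<Rightarrow> 'a"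
    by (induction M) (auto simp: ac_simps)
  have "(\<Sum>b<2 ^ Suc m. if popcount (Suc m) b = t then x else 0)
     = (\<Sum>c<2 ^ m. if popcount m c = t then x else 0) + (\<Sum>c<2 ^ m. if Suc (popcount m c) = t then x else 0)"
    by (simp add: halves sum.distrib)
  also have "\<dots> = of_nat (Suc m choose t) * x"
    using Suc.IH by (cases t) (simp_all add: distrib_right add.commute)
  finally show ?case .
qed

section \<open>Entries of the marginals\<close>

lemma dim_sym_vec [simp]: "dim_vec (sym_vec a b) = 2 ^ (a + b)"
  by (simp add: sym_vec_def)

lemma sym_vec_nth:
  assumes i: "i < 2 ^ (a + b)"
  shows "sym_vec a b $ i =
    (if popcount (a + b) i = b then complex_of_real (1 / sqrt (real ((a + b) choose a))) else 0)"
proof -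
  let ?W = "{ws. length ws = a + b \<and> length (filter id ws) = b}"
  have fin: "finite ?W"
    by (rule finite_subset[OF _ finite_lists_length_eq[of UNIV "a + b"]]) auto
  have "word_vec ws $ i = (if binary_word (a + b) i = ws then 1 else 0)" if "ws \<in> ?W" for ws
  proof -
    have "length ws = a + b" using that by simp
    then have "(i = word_index ws) = (binary_word (a + b) i = ws)"
      using word_index_binary_word[OF i] binary_word_word_index[of ws] by metis
    then show ?thesis
      unfolding word_vec_def using i \<open>length ws = a + b\<close> word_index_less[of ws] by simp
  qed
  then have "(\<Sum>ws\<in>?W. word_vec ws $ i) = (\<Sum>ws\<in>?W. if binary_word (a + b) i = ws then 1 else 0)"
    by (rule sum.cong[OF refl])
  also have "\<dots> = (if popcount (a + b) i = b then 1 else 0)"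
    by (simp add: sum.delta'[OF fin] count_ones_binary_word)
  finally show ?thesis
    using i by (simp add: sym_vec_def)
qed

lemma ketbra_nth: "i < dim_vec v \<Longrightarrow> j < dim_vec v \<Longrightarrow> ketbra v $$ (i, j) = v $ i * cnj (v $ j)"
  by (simp add: ketbra_def)

lemma ketbra_sym_vec_nth:
  assumes "r < 2 ^ (a + b)" "s < 2 ^ (a + b)"
  shows "ketbra (sym_vec a b) $$ (r, s) = (if popcount (a + b) r = b \<and> popcount (a + b) s = b
     then complex_of_real (1 / real ((a + b) choose a)) else 0)"
  using assms by (simp add: ketbra_nth sym_vec_nth flip: of_real_mult)

lemma shifted_index_less:
  fixes r b k m :: nat
  assumes "r < 2 ^ k" and "b < 2 ^ m"
  shows "r + 2 ^ k * b < 2 ^ (k + m)"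
proof -
  have "r + 2 ^ k * b < 2 ^ k * (b + 1)" using assms(1) by simp
  also have "\<dots> \<le> 2 ^ k * 2 ^ m" using assms(2) by (intro mult_left_mono) auto
  finally show ?thesis by (simp add: power_add)
qed

text \<open>Tracing out the last N - k factors counts the completions of a k-letter word
  containing t letters e_2 to an N-letter word containing N2 of them.\<close>
lemma gamma_spin_nth:
  assumes "k \<le> N1 + N2" and r: "r < 2 ^ k" and s: "s < 2 ^ k"
  shows "gamma_spin k N1 N2 $$ (r, s) = (if popcount k r = popcount k s \<and> popcount k r \<le> N2
     then complex_of_real (real ((N1 + N2 - k) choose (N2 - popcount k r)) / real ((N1 + N2) choose N1))
     else 0)"
proof -
  define m where "m = N1 + N2 - k"
  have Nm: "N1 + N2 = k + m" using assms(1) by (simp add: m_def)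
  define x where "x = complex_of_real (1 / real ((N1 + N2) choose N1))"
  have entry: "ketbra (sym_vec N1 N2) $$ (r + 2 ^ k * b, s + 2 ^ k * b) =
      (if popcount k r + popcount m b = N2 \<and> popcount k s + popcount m b = N2 then x else 0)"
    if "b < 2 ^ m" for b
    using ketbra_sym_vec_nth[of "r + 2 ^ k * b" N1 N2 "s + 2 ^ k * b"] Nm
      shifted_index_less[OF r that] shifted_index_less[OF s that]
      popcount_add_shift[OF r] popcount_add_shift[OF s]
    by (simp add: x_def)
  have "gamma_spin k N1 N2 $$ (r, s) =
      (\<Sum>b<2 ^ m. if popcount k r + popcount m b = N2 \<and> popcount k s + popcount m b = N2 then x else 0)"
    using r s entry by (simp add: gamma_spin_def marginal_def m_def)
  also have "\<dots> = (if popcount k r = popcount k s \<and> popcount k r \<le> N2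
     then of_nat (m choose (N2 - popcount k r)) * x else 0)"
  proof (cases "popcount k r = popcount k s \<and> popcount k r \<le> N2")
    case True
    then have "(\<Sum>b<2 ^ m. if popcount k r + popcount m b = N2 \<and> popcount k s + popcount m b = N2
        then x else 0) = (\<Sum>b<2 ^ m. if popcount m b = N2 - popcount k r then x else 0)"
      by (intro sum.cong) auto
    with True show ?thesis by (simp add: sum_popcount_eq)
  qed (auto intro!: sum.neutral)
  finally show ?thesis by (simp add: x_def m_def)
qed

lemma gamma_spin_inf_nth:
  assumes r: "r < 2 ^ k" and s: "s < 2 ^ k"
  shows "gamma_spin_inf k n1 n2 $$ (r, s) = (if popcount k r = popcount k s
     then complex_of_real (n1 ^ (k - popcount k r) * n2 ^ popcount k r) else 0)"
proof -
  have summand: "complex_of_real (real (k choose j) * n1 ^ (k - j) * n2 ^ j) * ketbra (sym_vec (k - j) j) $$ (r, s)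
      = (if popcount k r = j \<and> popcount k s = j then complex_of_real (n1 ^ (k - j) * n2 ^ j) else 0)"
    if j: "j \<le> k" for j
  proof -
    have "r < 2 ^ (k - j + j)" "s < 2 ^ (k - j + j)" using r s j by auto
    moreover have "k choose (k - j) = k choose j" using j by (simp add: binomial_symmetric[symmetric])
    moreover have "real (k choose j) > 0" using j by simp
    ultimately show ?thesis
      using ketbra_sym_vec_nth[of r "k - j" j s] j
      by (simp flip: of_real_mult of_real_divide add: field_simps)
  qed
  have "gamma_spin_inf k n1 n2 $$ (r, s) = (\<Sum>j\<le>k. if popcount k r = j \<and> popcount k s = j
      then complex_of_real (n1 ^ (k - j) * n2 ^ j) else 0)"
    using r s summand by (simp add: gamma_spin_inf_def)
  also have "\<dots> = (if popcount k r = popcount k s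
      then complex_of_real (n1 ^ (k - popcount k r) * n2 ^ popcount k r) else 0)"
    using popcount_le[of k r] by (auto simp: sum.delta' intro!: sum.neutral)
  finally show ?thesis .
qed

definition block_const_mat :: "nat \<Rightarrow> (nat \<Rightarrow> nat) \<Rightarrow> (nat \<Rightarrow> real) \<Rightarrow> complex mat" where
  "block_const_mat n c \<delta> = mat n n (\<lambda>(r, s). if c r = c s then complex_of_real (\<delta> (c r)) else 0)"

lemma gamma_spin_minus_gamma_spin_inf:
  assumes "k \<le> N2"
  shows "gamma_spin k N1 N2 - gamma_spin_inf k n1 n2 = block_const_mat (2 ^ k) (popcount k)
    (\<lambda>t. real ((N1 + N2 - k) choose (N2 - t)) / real ((N1 + N2) choose N1) - n1 ^ (k - t) * n2 ^ t)"
    (is "?L = ?R")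
proof (rule eq_matI)
  fix r s assume "r < dim_row ?R" and "s < dim_col ?R"
  then have rs: "r < 2 ^ k" "s < 2 ^ k" by (auto simp: block_const_mat_def)
  then show "?L $$ (r, s) = ?R $$ (r, s)"
    using assms gamma_spin_nth[of k N1 N2 r s] gamma_spin_inf_nth[OF rs, of n1 n2] popcount_le[of k r]
    by (simp add: block_const_mat_def gamma_spin_inf_def)
qed (simp_all add: block_const_mat_def gamma_spin_def gamma_spin_inf_def marginal_def)

section \<open>Positive semidefinite matrices\<close>

definition sesq_form :: "complex mat \<Rightarrow> complex vec \<Rightarrow> complex vec \<Rightarrow> complex" where
  "sesq_form S v w = (\<Sum>i<dim_row S. cnj (v $ i) * (S *\<^sub>v w) $ i)"

lemma psd_iff_sesq_form:
  "psd S \<longleftrightarrow> square_mat S \<and> adjoint S = S \<and>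
     (\<forall>v \<in> carrier_vec (dim_row S). 0 \<le> Re (sesq_form S v v))"
  by (simp add: psd_def sesq_form_def)

lemma psd_sesq_form_nonneg: "psd S \<Longrightarrow> S \<in> carrier_mat n n \<Longrightarrow> v \<in> carrier_vec n \<Longrightarrow> 0 \<le> Re (sesq_form S v v)"
  by (auto simp: psd_iff_sesq_form)

lemma psd_hermitian:
  assumes "psd S" "S \<in> carrier_mat n n" "i < n" "j < n"
  shows "S $$ (i, j) = cnj (S $$ (j, i))"
proof -
  have "adjoint S $$ (i, j) = S $$ (i, j)" using assms(1) by (simp add: psd_def)
  then show ?thesis using assms(2-4) by (auto simp: adjoint_def)
qed

lemma index_mult_mat_vec_sum:
  "S \<in> carrier_mat n m \<Longrightarrow> w \<in> carrier_vec m \<Longrightarrow> i < n \<Longrightarrow> (S *\<^sub>v w) $ i = (\<Sum>j<m. S $$ (i, j) * w $ j)"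
  by (auto simp: scalar_prod_def atLeast0LessThan)

lemma index_mult_mat_sum:
  "A \<in> carrier_mat n m \<Longrightarrow> B \<in> carrier_mat m p \<Longrightarrow> i < n \<Longrightarrow> j < p \<Longrightarrow>
    (A * B) $$ (i, j) = (\<Sum>l<m. A $$ (i, l) * B $$ (l, j))"
  by (auto simp: scalar_prod_def atLeast0LessThan)

lemma sesq_form_expand:
  assumes "S \<in> carrier_mat n n" "w \<in> carrier_vec n"
  shows "sesq_form S v w = (\<Sum>i<n. \<Sum>j<n. cnj (v $ i) * S $$ (i, j) * w $ j)"
proof -
  have "cnj (v $ i) * (S *\<^sub>v w) $ i = (\<Sum>j<n. cnj (v $ i) * S $$ (i, j) * w $ j)" if "i < n" for i
    unfolding index_mult_mat_vec_sum[OF assms that] by (simp add: sum_distrib_left mult.assoc)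
  then show ?thesis unfolding sesq_form_def using assms(1) by (intro sum.cong) auto
qed

lemma sesq_form_swap:
  assumes S: "S \<in> carrier_mat n n" and herm: "\<And>i j. i < n \<Longrightarrow> j < n \<Longrightarrow> S $$ (i, j) = cnj (S $$ (j, i))"
    and v: "v \<in> carrier_vec n" and w: "w \<in> carrier_vec n"
  shows "sesq_form S v w = cnj (sesq_form S w v)"
proof -
  have "sesq_form S v w = (\<Sum>j<n. \<Sum>i<n. cnj (v $ i) * S $$ (i, j) * w $ j)"
    unfolding sesq_form_expand[OF S w] by (rule sum.swap)
  also have "\<dots> = (\<Sum>j<n. \<Sum>i<n. cnj (cnj (w $ j) * S $$ (j, i) * v $ i))"
  proof (intro sum.cong refl)
    fix i j assume "i \<in> {..<n}" "j \<in> {..<n}"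
    then have "S $$ (j, i) = cnj (S $$ (i, j))" by (intro herm) auto
    then show "cnj (v $ i) * S $$ (i, j) * w $ j = cnj (cnj (w $ j) * S $$ (j, i) * v $ i)"
      by (simp add: mult_ac)
  qed
  also have "\<dots> = cnj (sesq_form S w v)"
    by (simp only: sesq_form_expand[OF S v] cnj_sum)
  finally show ?thesis .
qed

lemma nonneg_quadratic_imp_linear_coeff_zero:
  fixes A B :: real
  assumes "B \<ge> 0" "\<And>t. 0 \<le> 2 * t * A + t ^ 2 * B"
  shows "A = 0"
proof (rule ccontr)
  assume A: "A \<noteq> 0"
  define t where "t = - A / (B + 1)"
  have B1: "B + 1 > 0" using assms(1) by simp
  have tB: "t * (B + 1) = - A" using B1 by (simp add: t_def)
  have "0 \<le> 2 * t * A + t ^ 2 * B" by (rule assms(2))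
  also have "2 * t * A + t ^ 2 * B = - ((t ^ 2) * (B + 2))"
  proof -
    have "2 * t * A = - 2 * t * (t * (B + 1))" using tB by simp
    then show ?thesis by (simp add: power2_eq_square ring_distribs)
  qed
  also have "\<dots> < 0"
  proof -
    have "t \<noteq> 0" using A B1 by (simp add: t_def)
    then have "t ^ 2 > 0" by simp
    then show ?thesis using assms(1) by (simp add: mult_pos_pos)
  qed
  finally show False by simp
qed

lemma sesq_form_add_smult:
  fixes t :: real
  assumes S: "S \<in> carrier_mat n n" and v: "v \<in> carrier_vec n" and u: "u \<in> carrier_vec n"
  defines "w \<equiv> v + complex_of_real t \<cdot>\<^sub>v u"
  shows "sesq_form S w w = sesq_form S v v + of_real t * sesq_form S v u
    + of_real t * sesq_form S u v + of_real (t ^ 2) * sesq_form S u u"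
proof -
  have Sw: "S *\<^sub>v w = S *\<^sub>v v + complex_of_real t \<cdot>\<^sub>v (S *\<^sub>v u)"
    using S v u by (simp add: w_def mult_add_distrib_mat_vec mult_mat_vec)
  have "cnj (w $ i) * (S *\<^sub>v w) $ i = cnj (v $ i) * (S *\<^sub>v v) $ i + of_real t * (cnj (v $ i) * (S *\<^sub>v u) $ i)
      + of_real t * (cnj (u $ i) * (S *\<^sub>v v) $ i) + of_real (t ^ 2) * (cnj (u $ i) * (S *\<^sub>v u) $ i)"
    if "i \<in> {..<n}" for i
  proof -
    have "w $ i = v $ i + complex_of_real t * u $ i"
      "(S *\<^sub>v w) $ i = (S *\<^sub>v v) $ i + complex_of_real t * (S *\<^sub>v u) $ i"
      using that v u S unfolding Sw by (simp_all add: w_def del: index_mult_mat_vec)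
    moreover have "cnj (a + complex_of_real t * b) * (c + complex_of_real t * d) =
      cnj a * c + complex_of_real t * (cnj a * d) + complex_of_real t * (cnj b * c)
      + complex_of_real (t ^ 2) * (cnj b * d)" for a b c d
      by (simp add: ring_distribs power2_eq_square mult_ac)
    ultimately show ?thesis by (simp only:)
  qed
  then show ?thesis
    using S unfolding sesq_form_def sum_distrib_left sum.distrib[symmetric]
    by (intro sum.cong) auto
qed

text \<open>Positivity of the form along the line v + t S v forces the linear coefficient
  |S v|^2 to vanish once the constant term Re <v, S v> does.\<close>
lemma psd_sesq_form_zero_imp_kernel:
  assumes p: "psd S" and S: "S \<in> carrier_mat n n" and v: "v \<in> carrier_vec n"
    and z: "Re (sesq_form S v v) = 0"
  shows "S *\<^sub>v v = 0\<^sub>v n"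
proof -
  define u where "u = S *\<^sub>v v"
  have u: "u \<in> carrier_vec n" using S v by (simp add: u_def)
  define A where "A = (\<Sum>i<n. cmod (u $ i) ^ 2)"
  have uv: "sesq_form S u v = of_real A"
    unfolding sesq_form_def A_def of_real_sum u_def[symmetric] using S
    by (intro sum.cong) (simp_all only: carrier_matD complex_norm_square mult.commute)
  have vu: "sesq_form S v u = of_real A"
    using sesq_form_swap[OF S psd_hermitian[OF p S] v u] uv by simp
  have "0 \<le> 2 * t * A + t ^ 2 * Re (sesq_form S u u)" for t :: real
  proof -
    have "v + complex_of_real t \<cdot>\<^sub>v u \<in> carrier_vec n" using v u by simp
    from psd_sesq_form_nonneg[OF p S this] show ?thesis
      unfolding sesq_form_add_smult[OF S v u] using z uv vu by (simp add: mult_ac)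
  qed
  then have "A = 0"
    using nonneg_quadratic_imp_linear_coeff_zero psd_sesq_form_nonneg[OF p S u] by blast
  then have "\<forall>i\<in>{..<n}. cmod (u $ i) ^ 2 = 0"
    unfolding A_def by (subst sum_nonneg_eq_0_iff[symmetric]) auto
  then show ?thesis using u S by (intro eq_vecI) (auto simp: u_def)
qed

lemma psd_sum_sesq_form_zero_imp_kernel:
  assumes p: "psd S" and S: "S \<in> carrier_mat n n" and I: "finite I"
    and v: "\<And>i. i \<in> I \<Longrightarrow> v i \<in> carrier_vec n"
    and z: "(\<Sum>i\<in>I. Re (sesq_form S (v i) (v i))) = 0" and i: "i \<in> I"
  shows "S *\<^sub>v v i = 0\<^sub>v n"
proof (rule psd_sesq_form_zero_imp_kernel[OF p S v[OF i]])
  show "Re (sesq_form S (v i) (v i)) = 0"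
    using z I i psd_sesq_form_nonneg[OF p S v] by (subst (asm) sum_nonneg_eq_0_iff) auto
qed

text \<open>If X S = - S X then tr (X S X) = tr (S X X) = - tr (X S X) by cyclicity of the trace.\<close>
lemma trace_sandwich_anticommuting_eq_0:
  fixes x s :: "nat \<Rightarrow> nat \<Rightarrow> 'a :: field_char_0"
  assumes anti: "\<And>i j. i < n \<Longrightarrow> j < n \<Longrightarrow> (\<Sum>l<n. x i l * s l j) = - (\<Sum>l<n. s i l * x l j)"
  shows "(\<Sum>i<n. \<Sum>l<n. \<Sum>j<n. x i j * s j l * x l i) = 0"
proof -
  define T where "T = (\<Sum>i<n. \<Sum>l<n. \<Sum>j<n. x i j * s j l * x l i)"
  have "T = (\<Sum>i<n. \<Sum>l<n. - (\<Sum>j<n. s i j * x j l) * x l i)"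
    unfolding T_def by (intro sum.cong refl) (simp add: anti sum_distrib_right[symmetric])
  also have "\<dots> = - (\<Sum>i<n. \<Sum>l<n. \<Sum>j<n. s i j * x j l * x l i)"
    by (simp add: sum_distrib_right sum_negf)
  also have "(\<Sum>i<n. \<Sum>l<n. \<Sum>j<n. s i j * x j l * x l i) = (\<Sum>i<n. \<Sum>l<n. \<Sum>j<n. x l i * s i j * x j l)"
    by (simp only: mult_ac)
  also have "(\<Sum>i<n. \<Sum>l<n. \<Sum>j<n. x l i * s i j * x j l) = (\<Sum>l<n. \<Sum>i<n. \<Sum>j<n. x l i * s i j * x j l)"
    by (rule sum.swap)
  also have "\<dots> = T"
    unfolding T_def by (intro sum.cong refl sum.swap)
  finally have "T = - T" .
  then show ?thesis unfolding T_def by simp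
qed

lemma sandwich_diag_eq_sesq_form:
  assumes X: "X \<in> carrier_mat n n" and S: "S \<in> carrier_mat n n"
    and herm: "\<And>i j. i < n \<Longrightarrow> j < n \<Longrightarrow> X $$ (i, j) = cnj (X $$ (j, i))" and i: "i < n"
  shows "(\<Sum>l<n. \<Sum>j<n. X $$ (i, j) * S $$ (j, l) * X $$ (l, i)) = sesq_form S (col X i) (col X i)"
proof -
  have entry: "X $$ (i, j) * S $$ (j, l) * X $$ (l, i) = cnj (col X i $ j) * S $$ (j, l) * col X i $ l"
    if "j \<in> {..<n}" "l \<in> {..<n}" for j l
    using that X i herm[OF i, of j] by simp
  have "(\<Sum>l<n. \<Sum>j<n. X $$ (i, j) * S $$ (j, l) * X $$ (l, i))
      = (\<Sum>j<n. \<Sum>l<n. X $$ (i, j) * S $$ (j, l) * X $$ (l, i))"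
    by (rule sum.swap)
  also have "\<dots> = (\<Sum>j<n. \<Sum>l<n. cnj (col X i $ j) * S $$ (j, l) * col X i $ l)"
    by (intro sum.cong refl) (rule entry)
  also have "\<dots> = sesq_form S (col X i) (col X i)"
    using X col_dim[of X i] by (intro sesq_form_expand[OF S, symmetric]) simp
  finally show ?thesis .
qed

lemma hermitian_square_zero_imp_zero:
  assumes X: "X \<in> carrier_mat n n" and herm: "\<And>i j. i < n \<Longrightarrow> j < n \<Longrightarrow> X $$ (i, j) = cnj (X $$ (j, i))"
    and sq: "X * X = 0\<^sub>m n n"
  shows "X = 0\<^sub>m n n"
proof (rule eq_matI)
  fix j i assume "j < dim_row (0\<^sub>m n n :: complex mat)" "i < dim_col (0\<^sub>m n n :: complex mat)"
  then have ji: "j < n" "i < n" by auto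
  have "of_real (\<Sum>l<n. cmod (X $$ (l, i)) ^ 2) = (\<Sum>l<n. X $$ (i, l) * X $$ (l, i))"
    unfolding of_real_sum
  proof (intro sum.cong refl)
    fix l assume "l \<in> {..<n}"
    then have "X $$ (i, l) = cnj (X $$ (l, i))" using ji by (intro herm) auto
    then show "complex_of_real (cmod (X $$ (l, i)) ^ 2) = X $$ (i, l) * X $$ (l, i)"
      by (simp only: complex_norm_square mult.commute)
  qed
  also have "\<dots> = (X * X) $$ (i, i)" using index_mult_mat_sum[OF X X] ji by simp
  also have "\<dots> = 0" using sq ji by simp
  finally have "(\<Sum>l<n. cmod (X $$ (l, i)) ^ 2) = 0" by (simp only: of_real_eq_0_iff)
  then show "X $$ (j, i) = 0\<^sub>m n n $$ (j, i)" using ji by (subst (asm) sum_nonneg_eq_0_iff) auto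
qed (use X in auto)

text \<open>tr ((B - C) (B + C) (B - C)) vanishes since B - C anticommutes with B + C, and it is
  the sum of the nonnegative forms of B and C at the columns of B - C.\<close>
lemma psd_square_eq_imp_kernel:
  assumes B: "B \<in> carrier_mat n n" and C: "C \<in> carrier_mat n n"
    and pB: "psd B" and pC: "psd C" and BC: "B * B = C * C" and i: "i < n"
  shows "B *\<^sub>v col (B - C) i = 0\<^sub>v n" "C *\<^sub>v col (B - C) i = 0\<^sub>v n"
proof -
  define X where "X = B - C"
  have X: "X \<in> carrier_mat n n" unfolding X_def using C by (rule minus_carrier_mat)
  have Xij: "X $$ (i, j) = B $$ (i, j) - C $$ (i, j)" if "i < n" "j < n" for i j
    using that C by (simp add: X_def)
  have herm: "X $$ (i, j) = cnj (X $$ (j, i))" if "i < n" "j < n" for i j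
    using psd_hermitian[OF pB B that] psd_hermitian[OF pC C that] that by (simp add: Xij)
  have "(\<Sum>l<n. X $$ (i, l) * (B $$ (l, j) + C $$ (l, j))) = - (\<Sum>l<n. (B $$ (i, l) + C $$ (i, l)) * X $$ (l, j))"
    if "i < n" "j < n" for i j
  proof -
    have "(\<Sum>l<n. X $$ (i, l) * (B $$ (l, j) + C $$ (l, j))) + (\<Sum>l<n. (B $$ (i, l) + C $$ (i, l)) * X $$ (l, j))
        = 2 * ((B * B) $$ (i, j) - (C * C) $$ (i, j))"
      unfolding index_mult_mat_sum[OF B B that] index_mult_mat_sum[OF C C that]
        sum.distrib[symmetric] sum_subtractf[symmetric] sum_distrib_left
      using that by (intro sum.cong refl) (simp add: Xij algebra_simps)
    then show ?thesis using BC by (simp add: eq_neg_iff_add_eq_0)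
  qed
  then have "(\<Sum>i<n. \<Sum>l<n. \<Sum>j<n. X $$ (i, j) * (B $$ (j, l) + C $$ (j, l)) * X $$ (l, i)) = 0"
    by (rule trace_sandwich_anticommuting_eq_0)
  moreover have "(\<Sum>l<n. \<Sum>j<n. X $$ (i, j) * (B $$ (j, l) + C $$ (j, l)) * X $$ (l, i))
      = sesq_form B (col X i) (col X i) + sesq_form C (col X i) (col X i)" if "i < n" for i
    using sandwich_diag_eq_sesq_form[OF X B herm that] sandwich_diag_eq_sesq_form[OF X C herm that]
    by (simp add: distrib_left distrib_right sum.distrib)
  ultimately have "(\<Sum>i<n. sesq_form B (col X i) (col X i) + sesq_form C (col X i) (col X i)) = 0"
    by (metis (no_types, lifting) lessThan_iff sum.cong)
  then have "(\<Sum>i<n. Re (sesq_form B (col X i) (col X i))) + (\<Sum>i<n. Re (sesq_form C (col X i) (col X i))) = 0"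
    by (metis sum.distrib plus_complex.sel(1) Re_sum zero_complex.sel(1))
  moreover have cX: "col X i \<in> carrier_vec n" for i using X col_dim[of X i] by simp
  then have "(\<Sum>i<n. Re (sesq_form B (col X i) (col X i))) \<ge> 0" "(\<Sum>i<n. Re (sesq_form C (col X i) (col X i))) \<ge> 0"
    using psd_sesq_form_nonneg[OF pB B] psd_sesq_form_nonneg[OF pC C] by (auto intro: sum_nonneg)
  ultimately have "(\<Sum>i<n. Re (sesq_form B (col X i) (col X i))) = 0"
      "(\<Sum>i<n. Re (sesq_form C (col X i) (col X i))) = 0"
    by linarith+
  then show "B *\<^sub>v col (B - C) i = 0\<^sub>v n" "C *\<^sub>v col (B - C) i = 0\<^sub>v n"
    using psd_sum_sesq_form_zero_imp_kernel[OF pB B, where I = "{..<n}", OF _ cX]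
      psd_sum_sesq_form_zero_imp_kernel[OF pC C, where I = "{..<n}", OF _ cX] i
    by (simp_all add: X_def)
qed

text \<open>The columns of B - C lie in the kernels of B and C, so (B - C)^2 = 0.\<close>
lemma psd_square_eq_imp_eq:
  assumes B: "B \<in> carrier_mat n n" and C: "C \<in> carrier_mat n n"
    and pB: "psd B" and pC: "psd C" and BC: "B * B = C * C"
  shows "B = C"
proof -
  have BC0: "A * (B - C) = 0\<^sub>m n n" if "A \<in> {B, C}" for A
  proof (rule eq_matI)
    fix j i assume "j < dim_row (0\<^sub>m n n :: complex mat)" "i < dim_col (0\<^sub>m n n :: complex mat)"
    then have "j < n" "i < n" by auto
    then have "A *\<^sub>v col (B - C) i = 0\<^sub>v n"
      using that psd_square_eq_imp_kernel[OF B C pB pC BC] by auto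
    then have "col (A * (B - C)) i = 0\<^sub>v n"
      using that B C \<open>i < n\<close> by (subst col_mult2) auto
    then show "(A * (B - C)) $$ (j, i) = 0\<^sub>m n n $$ (j, i)"
      using that B C \<open>j < n\<close> \<open>i < n\<close> by (metis carrier_matD index_col index_minus_mat(2,3)
        index_mult_mat(2,3) index_zero_mat(1) index_zero_vec(1) insertE singletonD)
  qed (use that B C in auto)
  have "(B - C) * (B - C) = B * (B - C) - C * (B - C)"
    using B C by (intro minus_mult_distrib_mat) auto
  also have "\<dots> = 0\<^sub>m n n" using BC0 by simp
  finally have sq: "(B - C) * (B - C) = 0\<^sub>m n n" .
  have herm: "(B - C) $$ (i, j) = cnj ((B - C) $$ (j, i))" if "i < n" "j < n" for i j
    using psd_hermitian[OF pB B that] psd_hermitian[OF pC C that] that C by simp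
  have "B - C = 0\<^sub>m n n"
    by (rule hermitian_square_zero_imp_zero[OF minus_carrier_mat[OF C] herm sq])
  show ?thesis
  proof (rule eq_matI)
    fix i j assume "i < dim_row C" "j < dim_col C"
    then have "(B - C) $$ (i, j) = 0" using \<open>B - C = 0\<^sub>m n n\<close> C by simp
    then show "B $$ (i, j) = C $$ (i, j)" using \<open>i < dim_row C\<close> \<open>j < dim_col C\<close> by simp
  qed (use B C in auto)
qed

section \<open>The trace norm of block-constant matrices\<close>

lemma block_const_mat_carrier [simp]: "block_const_mat n c \<delta> \<in> carrier_mat n n"
  by (simp add: block_const_mat_def)

lemma dim_block_const_mat [simp]:
  "dim_row (block_const_mat n c \<delta>) = n" "dim_col (block_const_mat n c \<delta>) = n"
  by (simp_all add: block_const_mat_def)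

lemma adjoint_block_const_mat: "adjoint (block_const_mat n c \<delta>) = block_const_mat n c \<delta>"
  by (rule eq_matI) (auto simp: block_const_mat_def adjoint_def)

lemma sesq_form_block_const_mat:
  assumes v: "v \<in> carrier_vec n"
  shows "sesq_form (block_const_mat n c \<delta>) v v =
    (\<Sum>t\<in>c ` {..<n}. complex_of_real (\<delta> t * cmod (\<Sum>j<n. if c j = t then v $ j else 0) ^ 2))"
proof -
  define P where "P t i = (if c i = t then v $ i else 0)" for t i
  have "(\<Sum>t\<in>c ` {..<n}. complex_of_real (\<delta> t * cmod (\<Sum>j<n. P t j) ^ 2))
      = (\<Sum>t\<in>c ` {..<n}. complex_of_real (\<delta> t) * (cnj (\<Sum>i<n. P t i) * (\<Sum>j<n. P t j)))"
    by (intro sum.cong refl) (simp only: of_real_mult complex_norm_square mult.commute)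
  also have "\<dots> = (\<Sum>t\<in>c ` {..<n}. \<Sum>i<n. \<Sum>j<n. complex_of_real (\<delta> t) * (cnj (P t i) * P t j))"
    by (simp add: cnj_sum sum_product sum_distrib_left sum_distrib_right)
      (rule sum.cong[OF refl], rule sum.swap)
  also have "\<dots> = (\<Sum>i<n. \<Sum>j<n. \<Sum>t\<in>c ` {..<n}. complex_of_real (\<delta> t) * (cnj (P t i) * P t j))"
    by (subst sum.swap) (intro sum.cong refl sum.swap)
  also have "\<dots> = (\<Sum>i<n. \<Sum>j<n. cnj (v $ i) * block_const_mat n c \<delta> $$ (i, j) * v $ j)"
  proof (intro sum.cong refl)
    fix i j assume "i \<in> {..<n}" "j \<in> {..<n}"
    then have "(\<Sum>t\<in>c ` {..<n}. complex_of_real (\<delta> t) * (cnj (P t i) * P t j))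
        = (\<Sum>t\<in>c ` {..<n}. if t = c i then complex_of_real (\<delta> t) * (cnj (P t i) * P t j) else 0)"
      by (intro sum.cong refl) (auto simp: P_def)
    also have "\<dots> = complex_of_real (\<delta> (c i)) * (cnj (P (c i) i) * P (c i) j)"
      using \<open>i \<in> {..<n}\<close> by (simp add: sum.delta)
    finally show "(\<Sum>t\<in>c ` {..<n}. complex_of_real (\<delta> t) * (cnj (P t i) * P t j))
        = cnj (v $ i) * block_const_mat n c \<delta> $$ (i, j) * v $ j"
      using \<open>i \<in> {..<n}\<close> \<open>j \<in> {..<n}\<close> by (auto simp: P_def block_const_mat_def mult_ac)
  qed
  also have "\<dots> = sesq_form (block_const_mat n c \<delta>) v v"
    by (rule sesq_form_expand[OF block_const_mat_carrier v, symmetric])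
  finally show ?thesis unfolding P_def ..
qed

lemma psd_block_const_mat:
  assumes "\<And>t. 0 \<le> \<delta> t"
  shows "psd (block_const_mat n c \<delta>)"
proof -
  have "0 \<le> Re (sesq_form (block_const_mat n c \<delta>) v v)" if "v \<in> carrier_vec n" for v
    unfolding sesq_form_block_const_mat[OF that] Re_sum Re_complex_of_real
    using assms by (intro sum_nonneg) simp
  then show ?thesis by (simp add: psd_iff_sesq_form adjoint_block_const_mat)
qed

lemma block_const_mat_abs_square:
  "block_const_mat n c (\<lambda>t. \<bar>\<delta> t\<bar>) * block_const_mat n c (\<lambda>t. \<bar>\<delta> t\<bar>)
    = adjoint (block_const_mat n c \<delta>) * block_const_mat n c \<delta>"
proof (rule eq_matI)
  fix i j assume "i < dim_row (adjoint (block_const_mat n c \<delta>) * block_const_mat n c \<delta>)"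
    and "j < dim_col (adjoint (block_const_mat n c \<delta>) * block_const_mat n c \<delta>)"
  then have ij: "i < n" "j < n" by (simp_all add: adjoint_block_const_mat)
  show "(block_const_mat n c (\<lambda>t. \<bar>\<delta> t\<bar>) * block_const_mat n c (\<lambda>t. \<bar>\<delta> t\<bar>)) $$ (i, j)
      = (adjoint (block_const_mat n c \<delta>) * block_const_mat n c \<delta>) $$ (i, j)"
    unfolding adjoint_block_const_mat index_mult_mat_sum[OF block_const_mat_carrier block_const_mat_carrier ij]
    using ij by (intro sum.cong refl) (auto simp: block_const_mat_def simp flip: of_real_mult)
qed (simp_all add: adjoint_block_const_mat)

lemma mat_abs_block_const_mat:
  "mat_abs (block_const_mat n c \<delta>) = block_const_mat n c (\<lambda>t. \<bar>\<delta> t\<bar>)"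
  unfolding mat_abs_def
proof (rule the_equality)
  show "block_const_mat n c (\<lambda>t. \<bar>\<delta> t\<bar>) \<in> carrier_mat (dim_col (block_const_mat n c \<delta>)) (dim_col (block_const_mat n c \<delta>))
      \<and> psd (block_const_mat n c (\<lambda>t. \<bar>\<delta> t\<bar>))
      \<and> block_const_mat n c (\<lambda>t. \<bar>\<delta> t\<bar>) * block_const_mat n c (\<lambda>t. \<bar>\<delta> t\<bar>)
        = adjoint (block_const_mat n c \<delta>) * block_const_mat n c \<delta>"
    by (simp add: psd_block_const_mat block_const_mat_abs_square)
next
  fix B assume "B \<in> carrier_mat (dim_col (block_const_mat n c \<delta>)) (dim_col (block_const_mat n c \<delta>))
      \<and> psd B \<and> B * B = adjoint (block_const_mat n c \<delta>) * block_const_mat n c \<delta>"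
  then show "B = block_const_mat n c (\<lambda>t. \<bar>\<delta> t\<bar>)"
    by (intro psd_square_eq_imp_eq[of B n])
      (auto simp: psd_block_const_mat block_const_mat_abs_square)
qed

lemma trace_norm_block_const_mat:
  "trace_norm (block_const_mat n c \<delta>) = (\<Sum>r<n. \<bar>\<delta> (c r)\<bar>)"
  unfolding trace_norm_def mat_abs_block_const_mat mtrace_def by (simp add: block_const_mat_def)

section \<open>Binomial estimates\<close>

lemma fact_eq_fact_diff_mult_prod: "m \<le> n \<Longrightarrow> fact n = fact (n - m) * (\<Prod>i<m. n - i :: nat)"
proof (induction m)
  case 0 then show ?case by simp
next
  case (Suc m)
  then have "n - m = Suc (n - Suc m)" by simp
  then have "fact (n - m) = (n - m) * (fact (n - Suc m) :: nat)" by simp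
  then show ?case using Suc by (simp add: mult_ac)
qed

lemma prod_lessThan_add: "(\<Prod>i<t+s. g i) = (\<Prod>i<t. g i) * (\<Prod>j<s. g (t + j))"
  for g :: "nat \<Rightarrow> 'a::comm_monoid_mult"
  by (induction s) (simp_all add: mult_ac)

lemma binomial_mult_falling_prods:
  fixes N N1 N2 k t :: nat
  assumes N: "N = N1 + N2" and t: "t \<le> N2" "k - t \<le> N1" "t \<le> k"
  shows "(N choose N2) * ((\<Prod>i<t. N2 - i) * (\<Prod>j<k-t. N1 - j)) = ((N - k) choose (N2 - t)) * (\<Prod>i<k. N - i)"
proof -
  let ?A = "\<Prod>i<t. N2 - i" and ?B = "\<Prod>j<k-t. N1 - j" and ?P = "\<Prod>i<k. N - i"
  have kN: "k \<le> N" using N t by simp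
  have fa: "fact N2 = fact (N2 - t) * ?A" by (rule fact_eq_fact_diff_mult_prod[OF t(1)])
  have fb: "fact N1 = fact (N1 - (k - t)) * ?B" by (rule fact_eq_fact_diff_mult_prod[OF t(2)])
  have fN: "fact N = fact (N - k) * ?P" by (rule fact_eq_fact_diff_mult_prod[OF kN])
  have b1: "fact N2 * fact N1 * (N choose N2) = (fact N :: nat)"
    using binomial_fact_lemma[of N2 N] N by simp
  have e: "N - k - (N2 - t) = N1 - (k - t)" using N t by simp
  have b2: "fact (N2 - t) * fact (N1 - (k - t)) * ((N - k) choose (N2 - t)) = (fact (N - k) :: nat)"
    using binomial_fact_lemma[of "N2 - t" "N - k"] N t e by simp
  have "fact (N2 - t) * fact (N1 - (k - t)) * ((N choose N2) * (?A * ?B))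
      = fact (N2 - t) * fact (N1 - (k - t)) * (((N - k) choose (N2 - t)) * ?P)"
  proof -
    have "fact (N2 - t) * fact (N1 - (k - t)) * ((N choose N2) * (?A * ?B)) = fact N2 * fact N1 * (N choose N2)"
      unfolding fa fb by (simp add: mult_ac)
    also have "\<dots> = fact N" by (rule b1)
    also have "\<dots> = fact (N2 - t) * fact (N1 - (k - t)) * ((N - k) choose (N2 - t)) * ?P"
      unfolding fN b2 ..
    finally show ?thesis by (simp add: mult_ac)
  qed
  then show ?thesis by (simp del: mult_cancel_left add: mult.assoc)
qed

lemma abs_prod_diff_le:
  fixes a x :: "nat \<Rightarrow> real"
  assumes "\<And>i. i < m \<Longrightarrow> \<bar>a i\<bar> \<le> 1 \<and> \<bar>x i\<bar> \<le> 1 \<and> \<bar>a i - x i\<bar> \<le> e"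
  shows "\<bar>(\<Prod>i<m. a i) - (\<Prod>i<m. x i)\<bar> \<le> m * e"
  using assms
proof (induction m)
  case 0 then show ?case by simp
next
  case (Suc m)
  have IH: "\<bar>(\<Prod>i<m. a i) - (\<Prod>i<m. x i)\<bar> \<le> m * e" using Suc by simp
  have am: "\<bar>a m\<bar> \<le> 1" "\<bar>x m\<bar> \<le> 1" "\<bar>a m - x m\<bar> \<le> e" using Suc.prems by auto
  have Px: "\<bar>\<Prod>i<m. x i\<bar> \<le> 1"
    unfolding abs_prod by (rule prod_le_1) (use Suc.prems in auto)
  have "(\<Prod>i<Suc m. a i) - (\<Prod>i<Suc m. x i)
     = ((\<Prod>i<m. a i) - (\<Prod>i<m. x i)) * a m + (\<Prod>i<m. x i) * (a m - x m)"
    by (simp add: algebra_simps)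
  also have "\<bar>\<dots>\<bar> \<le> \<bar>(\<Prod>i<m. a i) - (\<Prod>i<m. x i)\<bar> * \<bar>a m\<bar> + \<bar>\<Prod>i<m. x i\<bar> * \<bar>a m - x m\<bar>"
    by (metis abs_mult abs_triangle_ineq)
  also have "\<dots> \<le> m * e * 1 + 1 * e"
    by (intro add_mono mult_mono) (use IH am Px in auto)
  finally show ?case by (simp add: algebra_simps)
qed

lemma abs_shifted_ratio_diff_le:
  fixes a m i k N :: real
  assumes "0 \<le> m" "m \<le> i" "i \<le> k" "0 \<le> a" "a \<le> N" "2 * k \<le> N" "0 < N"
  shows "\<bar>(a - m) / (N - i) - a / N\<bar> \<le> 2 * k / N"
proof -
  have Ni: "N - i \<ge> N / 2" using assms by linarith
  have Nip: "N - i > 0" using assms by linarith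
  have "(a - m) / (N - i) - a / N = (a * i - N * m) / (N * (N - i))"
    using Nip assms by (simp add: field_simps)
  also have "\<bar>\<dots>\<bar> = \<bar>a * i - N * m\<bar> / (N * (N - i))" using Nip assms by (simp add: abs_divide abs_mult)
  also have "\<dots> \<le> (N * k) / (N * (N / 2))"
  proof (rule frac_le)
    have "a * i \<le> N * k" using assms by (intro mult_mono) auto
    moreover have "N * m \<le> N * k" using assms by (intro mult_left_mono) auto
    moreover have "0 \<le> a * i" "0 \<le> N * m" using assms by auto
    ultimately show "\<bar>a * i - N * m\<bar> \<le> N * k" by linarith
    show "0 \<le> N * k" using assms by auto
    show "0 < N * (N / 2)" using assms by auto
    show "N * (N / 2) \<le> N * (N - i)" using Ni assms by (intro mult_left_mono) auto
  qed
  also have "\<dots> = 2 * k / N" using assms by (simp add: field_simps)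
  finally show ?thesis .
qed


text \<open>C(N-k, N2-t) / C(N, N2) is the probability that k letters drawn without replacement
  from N1 letters e_1 and N2 letters e_2 spell a fixed word with t letters e_2, written as a
  product of conditional probabilities.\<close>
lemma binomial_ratio_eq_prod:
  fixes N1 N2 k t :: nat
  assumes t: "t \<le> N2" "k - t \<le> N1" "t \<le> k"
  shows "real ((N1 + N2 - k) choose (N2 - t)) / real ((N1 + N2) choose N1)
    = (\<Prod>i<k. (if i < t then real (N2 - i) else real (N1 - (i - t))) / real (N1 + N2 - i))"
proof -
  define N where "N = N1 + N2"
  let ?A = "\<Prod>i<t. N2 - i" and ?B = "\<Prod>j<k-t. N1 - j" and ?P = "\<Prod>i<k. N - i"
  have kt: "k = t + (k - t)" using t by simp
  have num: "(\<Prod>i<k. (if i < t then real (N2 - i) else real (N1 - (i - t)))) = real (?A * ?B)"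
    by (subst kt, subst prod_lessThan_add) (simp add: of_nat_prod)
  have "(N choose N2) * (?A * ?B) = ((N - k) choose (N2 - t)) * ?P"
    by (rule binomial_mult_falling_prods) (use t N_def in auto)
  then have "real (?A * ?B) * real (N choose N2) = real ((N - k) choose (N2 - t)) * real ?P"
    by (metis of_nat_mult mult.commute)
  moreover have "real (N choose N2) \<noteq> 0" "real ?P \<noteq> 0"
    using t by (auto simp: N_def)
  ultimately have "real (?A * ?B) / real ?P = real ((N - k) choose (N2 - t)) / real (N choose N2)"
    by (simp add: frac_eq_eq)
  also have "N choose N2 = N choose N1" using N_def binomial_symmetric[of N1 N] by simp
  finally show ?thesis
    unfolding prod_dividef num N_def by (simp add: of_nat_prod)
qed

lemma ratio_approx_of_close:
  fixes a j i k N :: nat and p C :: real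
  assumes ji: "j \<le> i" "i < k" and ka: "k \<le> a" and aN: "a - j \<le> N - i" and kN: "2 * k \<le> N"
    and close: "\<bar>real a / real N - p\<bar> \<le> C / real N" and p: "0 \<le> p" "p \<le> 1"
  shows "\<bar>real (a - j) / real (N - i)\<bar> \<le> 1 \<and> \<bar>p\<bar> \<le> 1
    \<and> \<bar>real (a - j) / real (N - i) - p\<bar> \<le> (2 * real k + C) / real N"
proof -
  have sub: "real (a - j) = real a - real j" "real (N - i) = real N - real i"
    using ji ka kN by (simp_all add: of_nat_diff)
  have "\<bar>(real a - real j) / (real N - real i) - real a / real N\<bar> \<le> 2 * real k / real N"
    using ji ka aN kN by (intro abs_shifted_ratio_diff_le) linarith+
  then have "\<bar>real (a - j) / real (N - i) - p\<bar> \<le> (2 * real k + C) / real N"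
    using close unfolding sub add_divide_distrib by linarith
  moreover have "\<bar>real (a - j) / real (N - i)\<bar> \<le> 1"
    using aN ji kN by (simp add: divide_le_eq_1)
  ultimately show ?thesis using p by simp
qed

lemma binomial_ratio_approx:
  fixes N1 N2 k t :: nat and n1 n2 C :: real
  defines "N \<equiv> N1 + N2"
  assumes k1: "k \<le> N1" and k2: "k \<le> N2" and kN: "2 * k \<le> N" and t: "t \<le> k"
    and c1: "\<bar>real N1 / real N - n1\<bar> \<le> C / real N"
    and c2: "\<bar>real N2 / real N - n2\<bar> \<le> C / real N"
    and n1: "0 \<le> n1" "n1 \<le> 1" and n2: "0 \<le> n2" "n2 \<le> 1"
  shows "\<bar>real ((N - k) choose (N2 - t)) / real (N choose N1) - n1 ^ (k - t) * n2 ^ t\<bar>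
     \<le> real k * ((2 * real k + C) / real N)"
proof -
  define g where "g i = (if i < t then real (N2 - i) else real (N1 - (i - t))) / real (N - i)" for i
  define x where "x i = (if i < t then n2 else n1)" for i
  have "\<bar>g i\<bar> \<le> 1 \<and> \<bar>x i\<bar> \<le> 1 \<and> \<bar>g i - x i\<bar> \<le> (2 * real k + C) / real N" if "i < k" for i
  proof (cases "i < t")
    case True
    then show ?thesis
      using ratio_approx_of_close[where a = N2 and j = i and i = i and k = k and N = N and C = C and p = n2] that k2 kN c2 n2 by (simp add: g_def x_def N_def)
  next
    case False
    then show ?thesis
      using ratio_approx_of_close[where a = N1 and j = "i - t" and i = i and k = k and N = N and C = C and p = n1] that k1 kN c1 n1 t k2
      by (simp add: g_def x_def N_def)
  qed
  then have "\<bar>(\<Prod>i<k. g i) - (\<Prod>i<k. x i)\<bar> \<le> real k * ((2 * real k + C) / real N)"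
    by (intro abs_prod_diff_le) blast
  moreover have "(\<Prod>i<k. x i) = n1 ^ (k - t) * n2 ^ t"
    using t by (subst le_add_diff_inverse[OF t, symmetric], subst prod_lessThan_add) (simp add: x_def)
  moreover have "(\<Prod>i<k. g i) = real ((N - k) choose (N2 - t)) / real (N choose N1)"
    unfolding g_def N_def using k1 k2 t by (subst binomial_ratio_eq_prod) auto
  ultimately show ?thesis by simp
qed

section \<open>Convergence of the marginals\<close>

lemma inverse_bound_from_eventual_bound:
  fixes F :: "nat \<Rightarrow> real"
  assumes ev: "\<And>N. N \<ge> N0 \<Longrightarrow> P N \<Longrightarrow> F N \<le> K / real N" and K: "K \<ge> 0"
    and pos: "\<And>N. P N \<Longrightarrow> N > 0"
  shows "\<exists>c>0. \<forall>N. P N \<longrightarrow> F N \<le> c / real N"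
proof -
  define S where "S = (\<Sum>M<N0. \<bar>real M * F M\<bar>)"
  have S: "S \<ge> 0" unfolding S_def by (intro sum_nonneg) auto
  have "F N \<le> (K + S + 1) / real N" if "P N" for N
  proof (cases "N \<ge> N0")
    case True
    then have "F N \<le> K / real N" using ev that by blast
    also have "\<dots> \<le> (K + S + 1) / real N" using S by (intro divide_right_mono) auto
    finally show ?thesis .
  next
    case False
    then have "\<bar>real N * F N\<bar> \<le> S" unfolding S_def by (intro member_le_sum) auto
    then show ?thesis using pos[OF that] K by (simp add: field_simps)
  qed
  moreover have "K + S + 1 > 0" using K S by simp
  ultimately show ?thesis by blast
qed

lemma le_of_ratio_close:
  fixes x N k :: nat and m C :: real
  assumes close: "\<bar>real x / real N - m\<bar> \<le> C / real N" and m: "m > 0" and N: "N > 0"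
    and large: "real N \<ge> (real k + C) / m"
  shows "k \<le> x"
proof -
  have "m * real N - C \<le> real x"
    using close N by (simp add: abs_le_iff field_simps)
  moreover have "m * real N \<ge> real k + C" using large m by (simp add: field_simps)
  ultimately show ?thesis by linarith
qed

lemma trace_norm_gamma_spin_diff_le:
  fixes N1 N2 k :: nat and n1 n2 C :: real
  defines "N \<equiv> N1 + N2"
  assumes n1: "0 < n1" "n1 \<le> 1" and n2: "0 < n2" "n2 \<le> 1"
    and c1: "\<bar>real N1 / real N - n1\<bar> \<le> C / real N"
    and c2: "\<bar>real N2 / real N - n2\<bar> \<le> C / real N"
    and large: "2 * k + nat \<lceil>(real k + C) / n1\<rceil> + nat \<lceil>(real k + C) / n2\<rceil> \<le> N" and Np: "0 < N"
  shows "trace_norm (gamma_spin k N1 N2 - gamma_spin_inf k n1 n2)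
    \<le> 2 ^ k * (real k * (2 * real k + C)) / real N"
proof -
  have "(real k + C) / n1 \<le> real N" "(real k + C) / n2 \<le> real N"
    using large by linarith+
  then have k1: "k \<le> N1" and k2: "k \<le> N2"
    using le_of_ratio_close[OF c1 n1(1) Np] le_of_ratio_close[OF c2 n2(1) Np] by auto
  have "trace_norm (gamma_spin k N1 N2 - gamma_spin_inf k n1 n2)
      = (\<Sum>r<2 ^ k. \<bar>real ((N - k) choose (N2 - popcount k r)) / real (N choose N1)
          - n1 ^ (k - popcount k r) * n2 ^ popcount k r\<bar>)"
    by (simp add: gamma_spin_minus_gamma_spin_inf[OF k2] trace_norm_block_const_mat N_def)
  also have "\<dots> \<le> (\<Sum>r<(2::nat) ^ k. real k * ((2 * real k + C) / real N))"
    using binomial_ratio_approx[OF k1 k2 _ popcount_le] large Np c1 c2 n1 n2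
    by (intro sum_mono) (simp add: N_def)
  finally show ?thesis by simp
qed

theorem mainTheorem4:
  fixes n1 n2 :: real and N1 N2 :: "nat \<Rightarrow> nat"
  assumes "0 < n1" "n1 < 1" "0 < n2" "n2 < 1" "n1 + n2 = 1"
    and "\<And>N. N \<ge> 2 \<Longrightarrow> N1 N + N2 N = N"
    and "\<exists>C. \<forall>N\<ge>2. \<bar>real (N1 N) / real N - n1\<bar> \<le> C / real N"
    and "\<exists>C. \<forall>N\<ge>2. \<bar>real (N2 N) / real N - n2\<bar> \<le> C / real N"
  shows "\<forall>k::nat. \<exists>c>0. \<forall>N. N \<ge> 2 \<and> N > k \<longrightarrow>
           trace_norm (gamma_spin k (N1 N) (N2 N) - gamma_spin_inf k n1 n2) \<le> c / real N"
proof
  fix k :: nat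
  obtain C1 C2 where C1: "\<forall>N\<ge>2. \<bar>real (N1 N) / real N - n1\<bar> \<le> C1 / real N"
    and C2: "\<forall>N\<ge>2. \<bar>real (N2 N) / real N - n2\<bar> \<le> C2 / real N"
    using assms(7,8) by blast
  define C where "C = \<bar>C1\<bar> + \<bar>C2\<bar>"
  have "C1 / real N \<le> C / real N" "C2 / real N \<le> C / real N" for N
    by (auto simp: C_def intro!: divide_right_mono)
  with C1 C2 have close: "\<bar>real (N1 N) / real N - n1\<bar> \<le> C / real N"
      "\<bar>real (N2 N) / real N - n2\<bar> \<le> C / real N" if "N \<ge> 2" for N
    using that by (blast intro: order.trans)+
  show "\<exists>c>0. \<forall>N. N \<ge> 2 \<and> N > k \<longrightarrow>
      trace_norm (gamma_spin k (N1 N) (N2 N) - gamma_spin_inf k n1 n2) \<le> c / real N"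
  proof (rule inverse_bound_from_eventual_bound)
    fix N assume "2 * k + nat \<lceil>(real k + C) / n1\<rceil> + nat \<lceil>(real k + C) / n2\<rceil> \<le> N" "N \<ge> 2 \<and> N > k"
    then show "trace_norm (gamma_spin k (N1 N) (N2 N) - gamma_spin_inf k n1 n2)
        \<le> 2 ^ k * (real k * (2 * real k + C)) / real N"
      using trace_norm_gamma_spin_diff_le[of n1 n2 "N1 N" "N2 N" C k] close[of N] assms(1-4) assms(6)[of N]
      by simp
  qed (auto simp: C_def)
qed

end
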